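(* The predicate modal logic $\mathsf{QGrz}+\Box\exists x P(x)\to\Diamond\exists x\Box P(x)$ is not a modal companion of $\mathsf{IQC}$; i.e., there is a formula $\varphi$ of intuitionistic predicate logic with $\mathsf{IQC}\nvdash\varphi$ but $\mathsf{QGrz}+\Box\exists x P(x)\to\Diamond\exists x\Box P(x)\vdash\varphi^t$.
   Context: $\mathsf{IQC}$ is intuitionistic predicate calculus. $\mathsf{QS4}$ is the predicate extension of the modal logic $\mathsf{S4}$, and $\mathsf{QGrz}$ is $\mathsf{QS4}$ plus the Grzegorczyk axiom $\Box(\Box(p\to\Box p)\to p)\to p$ (with $p$ ranging over formulas). $\Diamond=\neg\Box\neg$. The Gödel translation $(-)^t$ of intuitionistic predicate formulas into modal predicate formulas is given by $\bot^t=\bot$, $P(\bar x)^t=\Box P(\bar x)$, $(\varphi\wedge\psi)^t=\varphi^t\wedge\psi^t$, $(\varphi\vee\psi)^t=\varphi^t\vee\psi^t$, $(\varphi\to\psi)^t=\Box(\neg\varphi^t\vee\psi^t)$, $(\forall x\varphi)^t=\Box\forall x\varphi^t$, $(\exists x\varphi)^t=\exists x\varphi^t$. A modal predicate logic $\mathsf{M}$ is a modal companion of $\mathsf{IQC}$ if for every formula $\varphi$, $\mathsf{IQC}\vdash\varphi$ iff $\mathsf{M}\vdash\varphi^t$. *)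

theory Defs
  imports Main
begin

text \<open>Individual variables are natural numbers (de Bruijn indices); predicate letters
are natural numbers, applied to a list of variables.\<close>

datatype iform =
    IBot
  | IPred nat "nat list"
  | IAnd iform iform
  | IOr iform iform
  | IImp iform iform
  | IAll iform
  | IEx iform

datatype mform =
    MBot
  | MPred nat "nat list"
  | MAnd mform mform
  | MOr mform mform
  | MImp mform mform
  | MAll mform
  | MEx mform
  | MBox mform

definition MNeg :: "mform \<Rightarrow> mform" where
  "MNeg A = MImp A MBot"

definition MDia :: "mform \<Rightarrow> mform" where
  "MDia A = MNeg (MBox (MNeg A))"

definition ext_ren :: "(nat \<Rightarrow> nat) \<Rightarrow> nat \<Rightarrow> nat" where
  "ext_ren f n = (case n of 0 \<Rightarrow> 0 | Suc m \<Rightarrow> Suc (f m))"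

primrec iren :: "(nat \<Rightarrow> nat) \<Rightarrow> iform \<Rightarrow> iform" where
  "iren f IBot = IBot"
| "iren f (IPred p xs) = IPred p (map f xs)"
| "iren f (IAnd A B) = IAnd (iren f A) (iren f B)"
| "iren f (IOr A B) = IOr (iren f A) (iren f B)"
| "iren f (IImp A B) = IImp (iren f A) (iren f B)"
| "iren f (IAll A) = IAll (iren (ext_ren f) A)"
| "iren f (IEx A) = IEx (iren (ext_ren f) A)"

primrec mren :: "(nat \<Rightarrow> nat) \<Rightarrow> mform \<Rightarrow> mform" where
  "mren f MBot = MBot"
| "mren f (MPred p xs) = MPred p (map f xs)"
| "mren f (MAnd A B) = MAnd (mren f A) (mren f B)"
| "mren f (MOr A B) = MOr (mren f A) (mren f B)"
| "mren f (MImp A B) = MImp (mren f A) (mren f B)"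
| "mren f (MAll A) = MAll (mren (ext_ren f) A)"
| "mren f (MEx A) = MEx (mren (ext_ren f) A)"
| "mren f (MBox A) = MBox (mren f A)"

definition inst_ren :: "nat \<Rightarrow> nat \<Rightarrow> nat" where
  "inst_ren t n = (case n of 0 \<Rightarrow> t | Suc m \<Rightarrow> m)"

inductive iqc :: "iform \<Rightarrow> bool" where
  i_K:    "iqc (IImp A (IImp B A))"
| i_S:    "iqc (IImp (IImp A (IImp B C)) (IImp (IImp A B) (IImp A C)))"
| i_c1:   "iqc (IImp (IAnd A B) A)"
| i_c2:   "iqc (IImp (IAnd A B) B)"
| i_c3:   "iqc (IImp A (IImp B (IAnd A B)))"
| i_d1:   "iqc (IImp A (IOr A B))"
| i_d2:   "iqc (IImp B (IOr A B))"
| i_d3:   "iqc (IImp (IImp A C) (IImp (IImp B C) (IImp (IOr A B) C)))"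
| i_efq:  "iqc (IImp IBot A)"
| i_all:  "iqc (IImp (IAll A) (iren (inst_ren t) A))"
| i_ex:   "iqc (IImp (iren (inst_ren t) A) (IEx A))"
| i_mp:   "iqc (IImp A B) \<Longrightarrow> iqc A \<Longrightarrow> iqc B"
| i_genr: "iqc (IImp (iren Suc B) A) \<Longrightarrow> iqc (IImp B (IAll A))"
| i_exr:  "iqc (IImp A (iren Suc B)) \<Longrightarrow> iqc (IImp (IEx A) B)"

text \<open>QS4 over classical predicate logic (all axioms as schemata, so the theorem set is
closed under substitution), plus the Grzegorczyk schema and the schema instances of
the additional axiom (with P(x) replaced by an arbitrary formula A, whose de Bruijn
variable 0 plays the role of x).\<close>

inductive qgrz_plus :: "mform \<Rightarrow> bool" where
  m_K:    "qgrz_plus (MImp A (MImp B A))"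
| m_S:    "qgrz_plus (MImp (MImp A (MImp B C)) (MImp (MImp A B) (MImp A C)))"
| m_c1:   "qgrz_plus (MImp (MAnd A B) A)"
| m_c2:   "qgrz_plus (MImp (MAnd A B) B)"
| m_c3:   "qgrz_plus (MImp A (MImp B (MAnd A B)))"
| m_d1:   "qgrz_plus (MImp A (MOr A B))"
| m_d2:   "qgrz_plus (MImp B (MOr A B))"
| m_d3:   "qgrz_plus (MImp (MImp A C) (MImp (MImp B C) (MImp (MOr A B) C)))"
| m_efq:  "qgrz_plus (MImp MBot A)"
| m_dne:  "qgrz_plus (MImp (MNeg (MNeg A)) A)"
| m_all:  "qgrz_plus (MImp (MAll A) (mren (inst_ren t) A))"
| m_ex:   "qgrz_plus (MImp (mren (inst_ren t) A) (MEx A))"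
| m_boxK: "qgrz_plus (MImp (MBox (MImp A B)) (MImp (MBox A) (MBox B)))"
| m_boxT: "qgrz_plus (MImp (MBox A) A)"
| m_box4: "qgrz_plus (MImp (MBox A) (MBox (MBox A)))"
| m_grz:  "qgrz_plus (MImp (MBox (MImp (MBox (MImp A (MBox A))) A)) A)"
| m_extra: "qgrz_plus (MImp (MBox (MEx A)) (MDia (MEx (MBox A))))"
| m_mp:   "qgrz_plus (MImp A B) \<Longrightarrow> qgrz_plus A \<Longrightarrow> qgrz_plus B"
| m_nec:  "qgrz_plus A \<Longrightarrow> qgrz_plus (MBox A)"
| m_genr: "qgrz_plus (MImp (mren Suc B) A) \<Longrightarrow> qgrz_plus (MImp B (MAll A))"
| m_exr:  "qgrz_plus (MImp A (mren Suc B)) \<Longrightarrow> qgrz_plus (MImp (MEx A) B)"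

primrec goedel :: "iform \<Rightarrow> mform" where
  "goedel IBot = MBot"
| "goedel (IPred p xs) = MBox (MPred p xs)"
| "goedel (IAnd A B) = MAnd (goedel A) (goedel B)"
| "goedel (IOr A B) = MOr (goedel A) (goedel B)"
| "goedel (IImp A B) = MBox (MOr (MNeg (goedel A)) (goedel B))"
| "goedel (IAll A) = MBox (MAll (goedel A))"
| "goedel (IEx A) = MEx (goedel A)"

end

theory Submission
  imports Defs
begin

text \<open>
The double negation shift \<open>\<forall>x \<not>\<not>P(x) \<rightarrow> \<not>\<not>\<forall>x P(x)\<close> fails in the constant-domain Kripke
model on \<open>(\<nat>, \<le>)\<close> in which \<open>P(d)\<close> holds from world \<open>d + 1\<close> on. Its Goedel translation,
however, is derivable. Classically \<open>\<exists>x (\<not>\<box>P(x) \<or> \<forall>y \<box>P(y))\<close>, so necessitation and the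
extra axiom give \<open>\<diamond>\<exists>x \<box>(\<not>\<box>P(x) \<or> \<forall>y \<box>P(y))\<close>. Assume the translations of \<open>\<forall>x \<not>\<not>P(x)\<close>
and \<open>\<not>\<forall>x P(x)\<close>; both are boxed, hence persist. For a witness \<open>x\<close>, \<open>\<box>P(x)\<close> would yield
\<open>\<box>\<forall>y \<box>P(y)\<close>, so the translation of \<open>\<not>P(x)\<close> holds, contradicting that of \<open>\<not>\<not>P(x)\<close>.
Thus \<open>\<box>\<not>\<exists>x \<box>(\<dots>)\<close>, against the diamond.
\<close>

primrec kforces ::
  "(nat \<Rightarrow> 'w::preorder \<Rightarrow> 'd list \<Rightarrow> bool) \<Rightarrow> 'w \<Rightarrow> (nat \<Rightarrow> 'd) \<Rightarrow> iform \<Rightarrow> bool" where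
  "kforces I w e IBot = False"
| "kforces I w e (IPred p xs) = I p w (map e xs)"
| "kforces I w e (IAnd A B) = (kforces I w e A \<and> kforces I w e B)"
| "kforces I w e (IOr A B) = (kforces I w e A \<or> kforces I w e B)"
| "kforces I w e (IImp A B) = (\<forall>v\<ge>w. kforces I v e A \<longrightarrow> kforces I v e B)"
| "kforces I w e (IAll A) = (\<forall>v\<ge>w. \<forall>d. kforces I v (case_nat d e) A)"
| "kforces I w e (IEx A) = (\<exists>d. kforces I w (case_nat d e) A)"

definition persistent :: "(nat \<Rightarrow> 'w::preorder \<Rightarrow> 'd list \<Rightarrow> bool) \<Rightarrow> bool" where
  "persistent I \<longleftrightarrow> (\<forall>p w v ds. w \<le> v \<longrightarrow> I p w ds \<longrightarrow> I p v ds)"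

lemma kforces_persistent:
  assumes "persistent I" "kforces I w e A" "w \<le> v"
  shows "kforces I v e A"
  using assms(2,3)
proof (induction A arbitrary: w v e)
  case (IPred p xs)
  then show ?case using assms(1) unfolding persistent_def by auto
qed (auto intro: order_trans)

lemma case_nat_comp_ext_ren: "case_nat d e \<circ> ext_ren f = case_nat d (e \<circ> f)"
  by (auto simp: ext_ren_def fun_eq_iff split: nat.split)

lemma comp_inst_ren: "e \<circ> inst_ren t = case_nat (e t) e"
  by (auto simp: inst_ren_def fun_eq_iff split: nat.split)

lemma kforces_iren: "kforces I w e (iren f A) = kforces I w (e \<circ> f) A"
  by (induction A arbitrary: w e f) (simp_all add: case_nat_comp_ext_ren)

lemma iqc_sound:
  assumes "iqc A" "persistent I"
  shows "kforces I w e A"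
  using assms(1)
proof (induction A arbitrary: w e rule: iqc.induct)
  case (i_S A B C)
  then show ?case by simp (meson order_trans order_refl)
next
  case (i_all A t)
  then show ?case by (auto simp: kforces_iren comp_inst_ren)
next
  case (i_ex t A)
  then show ?case by (auto simp: kforces_iren comp_inst_ren)
next
  case (i_mp A B)
  then show ?case by fastforce
next
  case (i_genr B A)
  have "kforces I u (case_nat d e) A" if "kforces I v e B" "v \<le> u" for v u d
  proof -
    have "kforces I u e B" using kforces_persistent[OF assms(2) that] .
    then show ?thesis using i_genr.IH[of u "case_nat d e"] by (simp add: kforces_iren comp_def)
  qed
  then show ?case by auto
next
  case (i_exr A B)
  have "kforces I v e B" if "w \<le> v" "kforces I v (case_nat d e) A" for v d
    using i_exr.IH[of v "case_nat d e"] that by (simp add: kforces_iren comp_def)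
  then show ?case by auto
qed (auto intro: kforces_persistent[OF assms(2)] order_trans)

abbreviation INeg :: "iform \<Rightarrow> iform" where
  "INeg A \<equiv> IImp A IBot"

abbreviation Px :: iform where
  "Px \<equiv> IPred 0 [0]"

definition double_negation_shift :: iform where
  "double_negation_shift = IImp (IAll (INeg (INeg Px))) (INeg (INeg (IAll Px)))"

lemma not_iqc_double_negation_shift: "\<not> iqc double_negation_shift"
proof
  define I :: "nat \<Rightarrow> nat \<Rightarrow> nat list \<Rightarrow> bool" where "I = (\<lambda>_ n ds. \<forall>d\<in>set ds. d < n)"
  assume "iqc double_negation_shift"
  moreover have "persistent I" by (auto simp: persistent_def I_def)
  ultimately have "kforces I 0 id double_negation_shift" by (rule iqc_sound)
  moreover have "kforces I 0 id (IAll (INeg (INeg Px)))"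
  proof -
    have "\<exists>u\<ge>v. d < u" for v d :: nat by (rule exI[of _ "Suc (max v d)"]) auto
    then show ?thesis by (auto simp: I_def)
  qed
  moreover have "\<not> kforces I n id (IAll Px)" for n
    by (auto simp: I_def intro!: exI[of _ n])
  ultimately show False unfolding double_negation_shift_def kforces.simps by (meson order_refl)
qed

text \<open>Necessitation and generalization apply to theorems only, which is what makes the
deduction theorem hold for derivations from hypotheses.\<close>

inductive qgrz_from :: "mform set \<Rightarrow> mform \<Rightarrow> bool" for G where
  ax: "qgrz_plus A \<Longrightarrow> qgrz_from G A"
| hyp: "A \<in> G \<Longrightarrow> qgrz_from G A"
| mp: "qgrz_from G (MImp A B) \<Longrightarrow> qgrz_from G A \<Longrightarrow> qgrz_from G B"

lemma qgrz_from_mono: "qgrz_from G A \<Longrightarrow> G \<subseteq> G' \<Longrightarrow> qgrz_from G' A"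
  by (induction rule: qgrz_from.induct) (auto intro: qgrz_from.intros)

lemma qgrz_from_empty: "qgrz_from {} A \<Longrightarrow> qgrz_plus A"
  by (induction rule: qgrz_from.induct) (auto intro: m_mp)

lemma qgrz_from_ax_mp: "qgrz_plus (MImp A B) \<Longrightarrow> qgrz_from G A \<Longrightarrow> qgrz_from G B"
  by (rule qgrz_from.mp[OF qgrz_from.ax])

lemma qgrz_plus_imp_refl: "qgrz_plus (MImp A A)"
  using m_mp[OF m_mp[OF m_S m_K] m_K[of A A]] .

lemma qgrz_from_impI: "qgrz_from (insert A G) B \<Longrightarrow> qgrz_from G (MImp A B)"
proof (induction rule: qgrz_from.induct)
  case (ax B)
  then show ?case by (rule qgrz_from_ax_mp[OF m_K qgrz_from.ax])
next
  case (hyp B)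
  show ?case
  proof (cases "B = A")
    case True
    then show ?thesis by (simp add: qgrz_from.ax qgrz_plus_imp_refl)
  next
    case False
    with hyp have "B \<in> G" by simp
    then show ?thesis by (rule qgrz_from_ax_mp[OF m_K qgrz_from.hyp])
  qed
next
  case (mp B C)
  from mp.IH show ?case by (rule qgrz_from.mp[OF qgrz_from_ax_mp[OF m_S]])
qed

lemma qgrz_from_notI: "qgrz_from (insert A G) MBot \<Longrightarrow> qgrz_from G (MNeg A)"
  unfolding MNeg_def by (rule qgrz_from_impI)

lemma qgrz_from_notE: "qgrz_from G (MNeg A) \<Longrightarrow> qgrz_from G A \<Longrightarrow> qgrz_from G B"
  unfolding MNeg_def by (rule qgrz_from_ax_mp[OF m_efq qgrz_from.mp])

lemma qgrz_from_ccontr: "qgrz_from (insert (MNeg A) G) MBot \<Longrightarrow> qgrz_from G A"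
  by (rule qgrz_from_ax_mp[OF m_dne qgrz_from_notI])

lemma qgrz_from_disjI1: "qgrz_from G A \<Longrightarrow> qgrz_from G (MOr A B)"
  by (rule qgrz_from_ax_mp[OF m_d1])

lemma qgrz_from_disjI2: "qgrz_from G B \<Longrightarrow> qgrz_from G (MOr A B)"
  by (rule qgrz_from_ax_mp[OF m_d2])

lemma qgrz_from_disjE:
  "qgrz_from G (MOr A B) \<Longrightarrow> qgrz_from (insert A G) C \<Longrightarrow> qgrz_from (insert B G) C
    \<Longrightarrow> qgrz_from G C"
  by (rule qgrz_from.mp[OF qgrz_from.mp[OF qgrz_from_ax_mp[OF m_d3 qgrz_from_impI] qgrz_from_impI]])

lemma qgrz_from_boxE: "qgrz_from G (MBox A) \<Longrightarrow> qgrz_from G A"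
  by (rule qgrz_from_ax_mp[OF m_boxT])

lemma qgrz_from_boxI:
  assumes "finite G" "\<forall>B\<in>G. \<exists>C. B = MBox C" "qgrz_from G A"
  shows "qgrz_from G (MBox A)"
  using assms
proof (induction G arbitrary: A rule: finite_induct)
  case empty
  from empty.prems(2) show ?case by (rule qgrz_from.ax[OF m_nec[OF qgrz_from_empty]])
next
  case (insert B G)
  then obtain C where B: "B = MBox C" by auto
  from insert.prems(2) have "qgrz_from G (MImp B A)" by (rule qgrz_from_impI)
  with insert.prems(1) have "qgrz_from G (MBox (MImp B A))" by (simp add: insert.IH)
  then have "qgrz_from G (MImp (MBox B) (MBox A))" by (rule qgrz_from_ax_mp[OF m_boxK])
  then have "qgrz_from (insert B G) (MImp (MBox B) (MBox A))" by (rule qgrz_from_mono) blast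
  moreover have "qgrz_from (insert B G) (MBox B)"
    unfolding B by (rule qgrz_from_ax_mp[OF m_box4 qgrz_from.hyp]) simp
  ultimately show ?case by (rule qgrz_from.mp)
qed

lemma qgrz_from_imp_disj:
  assumes "qgrz_from (insert X G) Y"
  shows "qgrz_from G (MOr (MNeg X) Y)"
proof (rule qgrz_from_ccontr)
  let ?G = "insert (MNeg (MOr (MNeg X) Y)) G"
  have "qgrz_from (insert X ?G) MBot"
  proof (rule qgrz_from_notE)
    show "qgrz_from (insert X ?G) (MNeg (MOr (MNeg X) Y))" by (rule qgrz_from.hyp) simp
    have "qgrz_from (insert X ?G) Y" by (rule qgrz_from_mono[OF assms]) blast
    then show "qgrz_from (insert X ?G) (MOr (MNeg X) Y)" by (rule qgrz_from_disjI2)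
  qed
  then have "qgrz_from ?G (MOr (MNeg X) Y)" by (rule qgrz_from_disjI1[OF qgrz_from_notI])
  then show "qgrz_from ?G MBot" by (rule qgrz_from_notE[rotated]) (rule qgrz_from.hyp, simp)
qed

lemma qgrz_from_goedel_impI:
  assumes "finite G" "\<forall>B\<in>insert (goedel A) G. \<exists>C. B = MBox C"
    and "qgrz_from (insert (goedel A) G) (goedel B)"
  shows "qgrz_from G (goedel (IImp A B))"
proof -
  from assms(3) have "qgrz_from G (MOr (MNeg (goedel A)) (goedel B))" by (rule qgrz_from_imp_disj)
  with assms(1,2) show ?thesis by (simp add: qgrz_from_boxI)
qed

lemma qgrz_from_goedel_impE:
  assumes "qgrz_from G (goedel (IImp A B))" "qgrz_from G (goedel A)"
  shows "qgrz_from G (goedel B)"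
proof (rule qgrz_from_disjE)
  from assms(1) show "qgrz_from G (MOr (MNeg (goedel A)) (goedel B))"
    by (simp add: qgrz_from_boxE)
  have "qgrz_from (insert (MNeg (goedel A)) G) (goedel A)" by (rule qgrz_from_mono[OF assms(2)]) blast
  then show "qgrz_from (insert (MNeg (goedel A)) G) (goedel B)"
    by (rule qgrz_from_notE[rotated]) (rule qgrz_from.hyp, simp)
  show "qgrz_from (insert (goedel B) G) (goedel B)" by (rule qgrz_from.hyp) simp
qed

lemma qgrz_from_allE: "qgrz_from G (MAll A) \<Longrightarrow> qgrz_from G (mren (inst_ren t) A)"
  by (rule qgrz_from_ax_mp[OF m_all])

lemma qgrz_from_exI: "qgrz_from G (mren (inst_ren t) A) \<Longrightarrow> qgrz_from G (MEx A)"
  by (rule qgrz_from_ax_mp[OF m_ex])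

text \<open>\<open>mren Suc B = B\<close> says that \<open>B\<close> has no free variables: this is the eigenvariable
condition of \<open>\<exists>\<close>-elimination.\<close>

lemma qgrz_from_ex_imp:
  assumes "finite G" "\<forall>B\<in>G. mren Suc B = B" "mren Suc C = C" "qgrz_from (insert A G) C"
  shows "qgrz_from G (MImp (MEx A) C)"
  using assms
proof (induction G arbitrary: C rule: finite_induct)
  case empty
  from empty.prems(3) have "qgrz_plus (MImp A C)" by (rule qgrz_from_empty[OF qgrz_from_impI])
  with empty.prems(2) have "qgrz_plus (MImp A (mren Suc C))" by simp
  then show ?case by (rule qgrz_from.ax[OF m_exr])
next
  case (insert B G)
  from insert.prems(3) have "qgrz_from (insert B (insert A G)) C" by (simp add: insert_commute)
  then have "qgrz_from (insert A G) (MImp B C)" by (rule qgrz_from_impI)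
  with insert.prems(1,2) have "qgrz_from G (MImp (MEx A) (MImp B C))" by (simp add: insert.IH)
  then have "qgrz_from (insert (MEx A) (insert B G)) (MImp (MEx A) (MImp B C))"
    by (rule qgrz_from_mono) blast
  then have "qgrz_from (insert (MEx A) (insert B G)) (MImp B C)"
    by (rule qgrz_from.mp) (rule qgrz_from.hyp, simp)
  then have "qgrz_from (insert (MEx A) (insert B G)) C"
    by (rule qgrz_from.mp) (rule qgrz_from.hyp, simp)
  then show ?case by (rule qgrz_from_impI)
qed

lemma qgrz_from_exE:
  "finite G \<Longrightarrow> \<forall>B\<in>G. mren Suc B = B \<Longrightarrow> mren Suc C = C \<Longrightarrow> qgrz_from G (MEx A)
    \<Longrightarrow> qgrz_from (insert A G) C \<Longrightarrow> qgrz_from G C"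
  by (rule qgrz_from.mp[OF qgrz_from_ex_imp])

definition drinker :: mform where
  "drinker = MOr (MNeg (goedel Px)) (MAll (goedel Px))"

lemma qgrz_ex_drinker: "qgrz_plus (MEx drinker)"
proof -
  let ?N = "MNeg (MEx drinker)"
  have ex_drinkerI: "qgrz_from G (MEx drinker)"
    if "qgrz_from G (MOr (MNeg (goedel Px)) (MAll (goedel Px)))" for G
    using qgrz_from_exI[of G 0 drinker] that
    by (simp add: drinker_def MNeg_def inst_ren_def ext_ren_def)
  have "qgrz_from {?N} (goedel Px)"
  proof (rule qgrz_from_ccontr)
    let ?G = "insert (MNeg (goedel Px)) {?N}"
    have "qgrz_from ?G (MNeg (goedel Px))" by (rule qgrz_from.hyp) simp
    then have "qgrz_from ?G (MEx drinker)" by (rule ex_drinkerI[OF qgrz_from_disjI1])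
    then show "qgrz_from ?G MBot" by (rule qgrz_from_notE[rotated]) (rule qgrz_from.hyp, simp)
  qed
  then have "qgrz_plus (MImp ?N (goedel Px))" by (rule qgrz_from_empty[OF qgrz_from_impI])
  moreover have "mren Suc ?N = ?N" by (simp add: drinker_def MNeg_def ext_ren_def)
  ultimately have "qgrz_plus (MImp ?N (MAll (goedel Px)))" by (simp add: m_genr)
  then have "qgrz_from {?N} (MAll (goedel Px))" by (rule qgrz_from_ax_mp) (rule qgrz_from.hyp, simp)
  then have "qgrz_from {?N} (MEx drinker)" by (rule ex_drinkerI[OF qgrz_from_disjI2])
  then have "qgrz_from {?N} MBot" by (rule qgrz_from_notE[rotated]) (rule qgrz_from.hyp, simp)
  then have "qgrz_from {} (MEx drinker)" by (rule qgrz_from_ccontr[OF qgrz_from_mono]) blast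
  then show ?thesis by (rule qgrz_from_empty)
qed

lemma qgrz_dia_ex_box_drinker: "qgrz_plus (MDia (MEx (MBox drinker)))"
  using m_mp[OF m_extra m_nec[OF qgrz_ex_drinker]] .

lemma qgrz_from_box_drinker_neg_atom:
  "qgrz_from {MBox drinker, goedel (INeg (IAll Px))} (goedel (INeg Px))"
proof (rule qgrz_from_goedel_impI)
  let ?G = "insert (goedel Px) {MBox drinker, goedel (INeg (IAll Px))}"
  have "qgrz_from ?G (MBox drinker)" by (rule qgrz_from.hyp) simp
  then have "qgrz_from ?G drinker" by (rule qgrz_from_boxE)
  then have "qgrz_from ?G (MOr (MNeg (goedel Px)) (MAll (goedel Px)))" by (simp only: drinker_def)
  then have "qgrz_from ?G (MAll (goedel Px))"
  proof (rule qgrz_from_disjE)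
    have "qgrz_from (insert (MNeg (goedel Px)) ?G) (goedel Px)" by (rule qgrz_from.hyp) simp
    then show "qgrz_from (insert (MNeg (goedel Px)) ?G) (MAll (goedel Px))"
      by (rule qgrz_from_notE[rotated]) (rule qgrz_from.hyp, simp)
    show "qgrz_from (insert (MAll (goedel Px)) ?G) (MAll (goedel Px))"
      by (rule qgrz_from.hyp) simp
  qed
  then have "qgrz_from ?G (MBox (MAll (goedel Px)))" by (rule qgrz_from_boxI[rotated 2]) simp_all
  then have "qgrz_from ?G (goedel (IAll Px))" by simp
  then show "qgrz_from ?G (goedel IBot)"
    by (rule qgrz_from_goedel_impE[rotated]) (rule qgrz_from.hyp, simp)
qed simp_all

lemma qgrz_from_not_ex_box_drinker:
  "qgrz_from {goedel (INeg (IAll Px)), goedel (IAll (INeg (INeg Px)))} (MNeg (MEx (MBox drinker)))"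
proof (rule qgrz_from_notI)
  let ?G = "insert (MEx (MBox drinker)) {goedel (INeg (IAll Px)), goedel (IAll (INeg (INeg Px)))}"
  have "qgrz_from (insert (MBox drinker) ?G) (MBox (MAll (goedel (INeg (INeg Px)))))"
    by (rule qgrz_from.hyp) simp
  then have "qgrz_from (insert (MBox drinker) ?G) (mren (inst_ren 0) (goedel (INeg (INeg Px))))"
    by (rule qgrz_from_allE[OF qgrz_from_boxE])
  then have "qgrz_from (insert (MBox drinker) ?G) (goedel (INeg (INeg Px)))"
    by (simp add: MNeg_def inst_ren_def)
  moreover have "qgrz_from (insert (MBox drinker) ?G) (goedel (INeg Px))"
    by (rule qgrz_from_mono[OF qgrz_from_box_drinker_neg_atom]) blast
  ultimately have "qgrz_from (insert (MBox drinker) ?G) MBot"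
    using qgrz_from_goedel_impE by fastforce
  moreover have "qgrz_from ?G (MEx (MBox drinker))" by (rule qgrz_from.hyp) simp
  moreover have "\<forall>B\<in>?G. mren Suc B = B" by (simp add: drinker_def MNeg_def ext_ren_def)
  ultimately show "qgrz_from ?G MBot" by (simp add: qgrz_from_exE)
qed

lemma qgrz_goedel_double_negation_shift: "qgrz_plus (goedel double_negation_shift)"
proof -
  let ?H = "goedel (IAll (INeg (INeg Px)))" and ?N = "goedel (INeg (IAll Px))"
  have "qgrz_from {?N, ?H} (MBox (MNeg (MEx (MBox drinker))))"
    by (rule qgrz_from_boxI[OF _ _ qgrz_from_not_ex_box_drinker]) simp_all
  then have "qgrz_from {?N, ?H} (goedel IBot)"
    by (rule qgrz_from_notE[OF qgrz_from.ax[OF qgrz_dia_ex_box_drinker[unfolded MDia_def]]])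
  then have "qgrz_from {?H} (goedel (INeg (INeg (IAll Px))))"
    by (rule qgrz_from_goedel_impI[rotated 2]) simp_all
  then have "qgrz_from {} (goedel double_negation_shift)"
    unfolding double_negation_shift_def by (rule qgrz_from_goedel_impI[rotated 2]) simp_all
  then show ?thesis by (rule qgrz_from_empty)
qed

theorem theorem5p12:
  shows "\<exists>\<phi>. \<not> iqc \<phi> \<and> qgrz_plus (goedel \<phi>)"
  using not_iqc_double_negation_shift qgrz_goedel_double_negation_shift by blast

end
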